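(* Let $C$ be an absolutely continuous bivariate copula with density $c(x,y)$, and suppose there is a real number $K>0$ such that $c(x,y)\ge K$ on a subset of $[0,1]^2$ of Lebesgue measure $1$. Then for every positive integer $n$, the density $c^n$ of the $n$-fold product $C^n$ satisfies $c^n(x,y)\ge K^n$ (on a set of Lebesgue measure $1$), and $C^n(x,y)\ge xyK^n$ for all $(x,y)\in[0,1]^2$.
   Context: A bivariate copula is a bivariate distribution function on $[0,1]^2$ with uniform marginals on $[0,1]$. For copulas $C,D$, the fold product is $C*D(x,y)=\int_0^1 C_{,2}(x,t)D_{,1}(t,y)\,dt$, where $C_{,i}$ denotes the partial derivative with respect to the $i$-th variable. The $n$-fold product is defined by $C^1=C$ and $C^n=C^{n-1}*C$ for $n>1$; $c^n$ denotes the density of $C^n$. *)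

theory Defs
  imports "HOL-Analysis.Analysis"
begin

text \<open>A bivariate copula, represented as a real function of two real variables;
  only its values on the unit square matter.\<close>
definition is_copula :: "(real \<Rightarrow> real \<Rightarrow> real) \<Rightarrow> bool" where
  "is_copula C \<longleftrightarrow>
     (\<forall>u\<in>{0..1}. C u 0 = 0 \<and> C 0 u = 0 \<and> C u 1 = u \<and> C 1 u = u) \<and>
     (\<forall>x1 x2 y1 y2. 0 \<le> x1 \<and> x1 \<le> x2 \<and> x2 \<le> 1 \<and> 0 \<le> y1 \<and> y1 \<le> y2 \<and> y2 \<le> 1 \<longrightarrow>
        C x2 y2 - C x2 y1 - C x1 y2 + C x1 y1 \<ge> 0)"

definition is_density :: "(real \<Rightarrow> real \<Rightarrow> real) \<Rightarrow> (real \<times> real \<Rightarrow> real) \<Rightarrow> bool" where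
  "is_density C d \<longleftrightarrow>
     set_integrable lborel ({0..1} \<times> {0..1}) d \<and>
     (\<forall>x\<in>{0..1}. \<forall>y\<in>{0..1}. C x y = set_lebesgue_integral lborel ({0..x} \<times> {0..y}) d)"

definition fold_prod :: "(real \<Rightarrow> real \<Rightarrow> real) \<Rightarrow> (real \<Rightarrow> real \<Rightarrow> real) \<Rightarrow> real \<Rightarrow> real \<Rightarrow> real" where
  "fold_prod C D x y =
     set_lebesgue_integral lebesgue {0..1} (\<lambda>t. deriv (\<lambda>s. C x s) t * deriv (\<lambda>s. D s y) t)"

text \<open>n-fold product: C^1 = C, C^(n+1) = C^n * C (the value at n = 0 is irrelevant).\<close>
fun fold_pow :: "(real \<Rightarrow> real \<Rightarrow> real) \<Rightarrow> nat \<Rightarrow> real \<Rightarrow> real \<Rightarrow> real" where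
  "fold_pow C 0 = C"
| "fold_pow C (Suc 0) = C"
| "fold_pow C (Suc (Suc n)) = fold_prod (fold_pow C (Suc n)) C"

end

theory Submission
  imports Defs
begin

text \<open>
  If a copula \<open>D\<close> has density \<open>d\<close>, then \<open>D(x, s) = \<integral>\<^sub>0\<^sup>s \<integral>\<^sub>0\<^sup>x d(u, t) du dt\<close>, and
  Lebesgue's differentiation theorem gives \<open>D\<^sub>,\<^sub>2(x, t) = \<integral>\<^sub>0\<^sup>x d(u, t) du\<close> for almost
  every \<open>t\<close>; symmetrically \<open>C\<^sub>,\<^sub>1(t, y) = \<integral>\<^sub>0\<^sup>y c(t, v) dv\<close>. By Fubini's theorem the fold
  product \<open>D * C\<close> therefore has the density \<open>(x, y) \<mapsto> \<integral>\<^sub>0\<^sup>1 d(x, t) c(t, y) dt\<close>, which is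
  at least \<open>a K\<close> on the unit square whenever \<open>d \<ge> a\<close> and \<open>c \<ge> K\<close> there. By induction \<open>C\<^sup>n\<close>
  has a density bounded below by \<open>K\<^sup>n\<close>. Densities are unique almost everywhere, and
  integrating the bound over \<open>[0, x] \<times> [0, y]\<close> gives \<open>C\<^sup>n(x, y) \<ge> x y K\<^sup>n\<close>.
\<close>

section \<open>Lebesgue's density theorem\<close>

lemma mult_emeasure_UN_le_diff:
  assumes "countable I" "disjoint_family_on S I" "\<And>i. i \<in> I \<Longrightarrow> S i \<in> sets M" "E \<in> sets M"
    and "\<And>i. i \<in> I \<Longrightarrow> c * emeasure M (S i) \<le> emeasure M (S i - E)"
  shows "c * emeasure M (\<Union>i\<in>I. S i) \<le> emeasure M ((\<Union>i\<in>I. S i) - E)"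
proof -
  have disj: "disjoint_family_on (\<lambda>i. S i - E) I"
    using assms(2) unfolding disjoint_family_on_def by blast
  have "c * emeasure M (\<Union>i\<in>I. S i) = (\<integral>\<^sup>+i. c * emeasure M (S i) \<partial>count_space I)"
    using assms(1-3) by (simp add: emeasure_UN_countable nn_integral_cmult)
  also have "\<dots> \<le> (\<integral>\<^sup>+i. emeasure M (S i - E) \<partial>count_space I)"
    using assms(5) by (intro nn_integral_mono) auto
  also have "\<dots> = emeasure M (\<Union>i\<in>I. S i - E)"
    using assms(1,3,4) disj by (intro emeasure_UN_countable[symmetric]) auto
  also have "(\<Union>i\<in>I. S i - E) = (\<Union>i\<in>I. S i) - E"
    by blast
  finally show ?thesis .
qed

lemma Vitali_covering_in_open:
  fixes S U :: "'a::euclidean_space set"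
  assumes U: "open U" "S \<subseteq> U"
    and P: "\<And>x r. x \<in> S \<Longrightarrow> 0 < r \<Longrightarrow> \<exists>d. 0 < d \<and> d < r \<and> P x d"
  obtains C where "countable C" "\<And>i. i \<in> C \<Longrightarrow> 0 < snd i \<and> cball (fst i) (snd i) \<subseteq> U \<and> P (fst i) (snd i)"
    "disjoint_family_on (\<lambda>i. cball (fst i) (snd i)) C" "negligible (S - (\<Union>i\<in>C. cball (fst i) (snd i)))"
proof -
  define K where "K = {(x, d). 0 < d \<and> cball x d \<subseteq> U \<and> P x d}"
  have cover: "\<exists>i. i \<in> K \<and> x \<in> cball (fst i) (snd i) \<and> snd i < r" if x: "x \<in> S" and "0 < r" for x r
  proof -
    obtain \<rho> where \<rho>: "\<rho> > 0" "ball x \<rho> \<subseteq> U"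
      using x U open_contains_ball by blast
    then obtain d where d: "0 < d" "d < min r \<rho>" "P x d"
      using P[OF x, of "min r \<rho>"] \<open>0 < r\<close> by auto
    then have "cball x d \<subseteq> ball x \<rho>"
      by (simp add: cball_subset_ball_iff)
    then show ?thesis
      using d \<rho>(2) by (intro exI[of _ "(x, d)"]) (auto simp: K_def)
  qed
  obtain C where "countable C" "C \<subseteq> K"
      "pairwise (\<lambda>i j. disjnt (cball (fst i) (snd i)) (cball (fst j) (snd j))) C"
      "negligible (S - (\<Union>i\<in>C. cball (fst i) (snd i)))"
  proof (rule Vitali_covering_theorem_cballs[of K snd S fst, OF _ cover])
    show "\<And>i. i \<in> K \<Longrightarrow> 0 < snd i"
      by (auto simp: K_def)
  qed
  moreover have "0 < snd i \<and> cball (fst i) (snd i) \<subseteq> U \<and> P (fst i) (snd i)" if "i \<in> C" for i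
    using \<open>C \<subseteq> K\<close> that by (cases i) (auto simp: K_def)
  ultimately show ?thesis
    by (intro that) (auto simp: disjoint_family_on_def pairwise_def disjnt_def)
qed

lemma lmeasurable_UN_mult_measure_le_diff:
  assumes I: "countable I" "disjoint_family_on S I" "\<And>i. i \<in> I \<Longrightarrow> S i \<in> lmeasurable \<and> S i \<subseteq> U"
    and E: "E \<in> lmeasurable" and U: "U \<in> lmeasurable" and "0 < k"
    and ratio: "\<And>i. i \<in> I \<Longrightarrow> k * measure lebesgue (S i) \<le> measure lebesgue (S i - E)"
  shows "(\<Union>i\<in>I. S i) \<in> lmeasurable" "k * measure lebesgue (\<Union>i\<in>I. S i) \<le> measure lebesgue (U - E)"
proof -
  have "(\<Union>i\<in>I. S i) \<in> sets lebesgue" "(\<Union>i\<in>I. S i) \<subseteq> U"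
    using I by (auto intro: sets.countable_UN'')
  then show B: "(\<Union>i\<in>I. S i) \<in> lmeasurable"
    using U by (auto intro: fmeasurableI2)
  have "ennreal k * emeasure lebesgue (\<Union>i\<in>I. S i) \<le> emeasure lebesgue ((\<Union>i\<in>I. S i) - E)"
  proof (rule mult_emeasure_UN_le_diff)
    fix i
    assume "i \<in> I"
    then show "ennreal k * emeasure lebesgue (S i) \<le> emeasure lebesgue (S i - E)"
      using I(3) ratio E \<open>0 < k\<close>
      by (simp add: emeasure_eq_measure2 fmeasurable_Diff ennreal_mult[symmetric] ennreal_leI)
  qed (use I E in auto)
  also have "\<dots> \<le> emeasure lebesgue (U - E)"
    using \<open>(\<Union>i\<in>I. S i) \<subseteq> U\<close> U E by (intro emeasure_mono) auto
  finally have "ennreal (k * measure lebesgue (\<Union>i\<in>I. S i)) \<le> ennreal (measure lebesgue (U - E))"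
    using B U E \<open>0 < k\<close> by (simp add: emeasure_eq_measure2 fmeasurable_Diff ennreal_mult)
  then show "k * measure lebesgue (\<Union>i\<in>I. S i) \<le> measure lebesgue (U - E)"
    by (simp add: ennreal_le_iff)
qed

text \<open>Cover the bad points by disjoint balls inside an open \<open>U \<supseteq> E\<close> with \<open>U - E\<close> small:
  each ball loses a fraction \<open>k\<close> of its measure to \<open>U - E\<close>.\<close>

lemma negligible_low_density_points:
  fixes E :: "'a::euclidean_space set"
  assumes E: "E \<in> lmeasurable" and k: "k > 0"
  shows "negligible {x \<in> E. \<forall>r>0. \<exists>d. 0 < d \<and> d < r \<and>
            k * measure lebesgue (cball x d) < measure lebesgue (cball x d - E)}"
    (is "negligible ?A")
proof (unfold negligible_outer, intro allI impI)
  fix \<epsilon> :: real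
  assume "\<epsilon> > 0"
  then obtain U where U: "open U" "E \<subseteq> U" "U - E \<in> lmeasurable"
      "emeasure lebesgue (U - E) < ennreal (\<epsilon> * k)"
    using sets_lebesgue_outer_open[of E "\<epsilon> * k"] E k by (auto simp: fmeasurable_def)
  then have "measure lebesgue (U - E) < \<epsilon> * k"
    by (subst (asm) emeasure_eq_measure2, simp) (subst (asm) ennreal_less_iff, auto)
  have "U = E \<union> (U - E)"
    using U(2) by blast
  then have U_lm: "U \<in> lmeasurable"
    using E U(3) by (metis fmeasurable.Un)
  obtain C where C: "countable C" "disjoint_family_on (\<lambda>i. cball (fst i) (snd i)) C"
      "\<And>i. i \<in> C \<Longrightarrow> cball (fst i) (snd i) \<subseteq> U \<and>
        k * measure lebesgue (cball (fst i) (snd i)) < measure lebesgue (cball (fst i) (snd i) - E)"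
      "negligible (?A - (\<Union>i\<in>C. cball (fst i) (snd i)))"
    by (rule Vitali_covering_in_open[OF U(1), of ?A
        "\<lambda>x d. k * measure lebesgue (cball x d) < measure lebesgue (cball x d - E)"]) (use U(2) in auto)
  define B where "B = (\<Union>i\<in>C. cball (fst i) (snd i))"
  have "\<And>i. i \<in> C \<Longrightarrow> cball (fst i) (snd i) \<in> lmeasurable \<and> cball (fst i) (snd i) \<subseteq> U"
      "\<And>i. i \<in> C \<Longrightarrow> k * measure lebesgue (cball (fst i) (snd i)) \<le> measure lebesgue (cball (fst i) (snd i) - E)"
    using C(3) by (auto simp: less_imp_le)
  note B = lmeasurable_UN_mult_measure_le_diff[OF C(1,2) this(1) E U_lm k this(2), folded B_def]
  have N: "?A - B \<in> lmeasurable" "measure lebesgue (?A - B) = 0"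
    using C(4) by (auto simp: B_def negligible_imp_measurable negligible_imp_measure0)
  have "B \<union> (?A - B) \<in> lmeasurable"
    using B(1) N(1) by (rule fmeasurable.Un)
  moreover have "measure lebesgue (B \<union> (?A - B)) \<le> measure lebesgue B + measure lebesgue (?A - B)"
    using B(1) N by (intro measure_Un_le) auto
  moreover have "k * measure lebesgue B < k * \<epsilon>"
    using B(2) \<open>measure lebesgue (U - E) < \<epsilon> * k\<close> by (simp add: mult.commute)
  then have "measure lebesgue B < \<epsilon>"
    using k by simp
  ultimately show "\<exists>T. ?A \<subseteq> T \<and> T \<in> lmeasurable \<and> measure lebesgue T < \<epsilon>"
    using N(2) by (intro exI[of _ "B \<union> (?A - B)"]) auto
qed

lemma AE_density_point:
  fixes E :: "'a::euclidean_space set"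
  assumes E: "E \<in> lmeasurable"
  shows "AE x in lborel. x \<in> E \<longrightarrow> (\<forall>k>0. \<forall>\<^sub>F d in at_right 0.
           measure lebesgue (cball x d - E) \<le> k * measure lebesgue (cball x d))"
proof -
  define A where "A n = {x \<in> E. \<forall>r>0. \<exists>d. 0 < d \<and> d < r \<and>
            1 / Suc n * measure lebesgue (cball x d) < measure lebesgue (cball x d - E)}" for n :: nat
  have "negligible (\<Union>n. A n)"
    unfolding A_def by (intro negligible_Union_nat negligible_low_density_points[OF E]) simp
  then have "AE x in lebesgue. x \<notin> (\<Union>n. A n)"
    by (intro AE_not_in) (simp add: negligible_iff_null_sets)
  then have "AE x in lborel. x \<notin> (\<Union>n. A n)"
    by (simp only: AE_completion_iff)
  then show ?thesis
  proof (rule eventually_mono, intro impI allI)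
    fix x and k :: real
    assume x: "x \<notin> (\<Union>n. A n)" "x \<in> E" and "k > 0"
    then obtain n :: nat where n: "1 / Suc n < k"
      using reals_Archimedean by (metis inverse_eq_divide)
    have "\<not> (\<forall>r>0. \<exists>d. 0 < d \<and> d < r \<and>
        1 / Suc n * measure lebesgue (cball x d) < measure lebesgue (cball x d - E))"
      using x by (auto simp: A_def)
    then have "\<exists>r>0. \<forall>d. 0 < d \<and> d < r \<longrightarrow>
        measure lebesgue (cball x d - E) \<le> 1 / Suc n * measure lebesgue (cball x d)"
      by (meson not_le)
    moreover have "1 / Suc n * measure lebesgue (cball x d) \<le> k * measure lebesgue (cball x d)" for d
      using n by (intro mult_right_mono) auto
    ultimately show "\<forall>\<^sub>F d in at_right 0. measure lebesgue (cball x d - E) \<le> k * measure lebesgue (cball x d)"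
      unfolding eventually_at_right_field by (meson order.trans)
  qed
qed

section \<open>Differentiation of indefinite integrals on the unit interval\<close>

lemma set_integrable_unit_interval:
  fixes g :: "real \<Rightarrow> real"
  assumes g: "g \<in> borel_measurable lborel" "AE t in lborel. t \<in> {0..1} \<longrightarrow> 0 \<le> g t \<and> g t \<le> 1"
    and I: "I \<in> sets borel" "I \<subseteq> {0..1}"
  shows "set_integrable lborel I g"
proof -
  have "emeasure lborel I \<le> emeasure lborel {0..1::real}"
    using I(2) by (rule emeasure_mono) simp
  then have "emeasure lborel I < \<infinity>"
    by (simp add: le_less_trans)
  moreover have "AE t in lborel. t \<in> I \<longrightarrow> norm (g t) \<le> 1"
    using g(2) by eventually_elim (use I(2) in auto)
  ultimately show ?thesis
    using integrableI_bounded_set_indicator[of I lborel g] I g(1) by (simp add: set_integrable_def)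
qed

lemma set_integral_ge_superlevel_set:
  fixes g :: "real \<Rightarrow> real"
  assumes g: "g \<in> borel_measurable borel" "set_integrable lborel I g"
      "AE t in lborel. t \<in> I \<longrightarrow> 0 \<le> g t"
    and I: "I \<in> sets borel" "emeasure lborel I < \<infinity>" and "q \<le> 1"
  shows "q * measure lborel I - measure lborel (I - {t. q < g t}) \<le> set_lebesgue_integral lborel I g"
proof -
  define L where "L = I - {t. q < g t}"
  have L: "L \<in> sets borel" "emeasure lborel L < \<infinity>"
    using I g(1) by (auto simp: L_def intro: le_less_trans[OF emeasure_mono])
  have "q * measure lborel I - measure lborel L = (\<integral>t. indicator I t * q - indicator L t \<partial>lborel)"
    using I L by (simp add: mult.commute)
  also have "\<dots> \<le> (\<integral>t. indicator I t * g t \<partial>lborel)"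
  proof (rule integral_mono_AE)
    show "AE t in lborel. indicator I t * q - indicator L t \<le> indicator I t * g t"
      using g(3) by eventually_elim (use \<open>q \<le> 1\<close> in \<open>auto simp: L_def indicator_def\<close>)
  qed (use I L g(2) in \<open>auto simp: set_integrable_def\<close>)
  finally show ?thesis
    by (simp add: L_def set_lebesgue_integral_def)
qed

lemma measure_cball_real: "0 \<le> r \<Longrightarrow> measure lebesgue (cball (t::real) r) = 2 * r"
  by (simp add: cball_eq_atLeastAtMost)

lemma has_real_derivative_if_diff_quotient_bounds:
  fixes F :: "real \<Rightarrow> real"
  assumes lower: "\<And>\<epsilon>. \<epsilon> > 0 \<Longrightarrow> \<forall>\<^sub>F y in at t. l - \<epsilon> < (F y - F t) / (y - t)"
    and upper: "\<And>\<epsilon>. \<epsilon> > 0 \<Longrightarrow> \<forall>\<^sub>F y in at t. (F y - F t) / (y - t) < l + \<epsilon>"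
  shows "(F has_real_derivative l) (at t)"
  unfolding has_field_derivative_iff
proof (rule tendstoI)
  fix \<epsilon> :: real
  assume "\<epsilon> > 0"
  with lower upper have "\<forall>\<^sub>F y in at t. l - \<epsilon> < (F y - F t) / (y - t) \<and> (F y - F t) / (y - t) < l + \<epsilon>"
    by (simp add: eventually_conj)
  then show "\<forall>\<^sub>F y in at t. dist ((F y - F t) / (y - t)) l < \<epsilon>"
    by eventually_elim (auto simp: dist_real_def abs_less_iff)
qed

locale indefinite_integral_unit_interval =
  fixes g F :: "real \<Rightarrow> real"
  assumes measurable_g: "g \<in> borel_measurable lborel"
    and bounds_g: "AE t in lborel. t \<in> {0..1} \<longrightarrow> 0 \<le> g t \<and> g t \<le> 1"
    and F_eq: "\<And>s. s \<in> {0..1} \<Longrightarrow> F s = set_lebesgue_integral lborel {0..s} g"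
begin

lemma diff_eq_set_integral:
  assumes "0 \<le> a" "a \<le> b" "b \<le> 1"
  shows "F b - F a = set_lebesgue_integral lborel {a<..b} g"
proof -
  have "{0..b} = {0..a} \<union> {a<..b}"
    using assms by auto
  then have "F b = set_lebesgue_integral lborel ({0..a} \<union> {a<..b}) g"
    using assms F_eq[of b] by simp
  also have "\<dots> = set_lebesgue_integral lborel {0..a} g + set_lebesgue_integral lborel {a<..b} g"
    using assms by (intro set_integral_Un set_integrable_unit_interval[OF measurable_g bounds_g]) auto
  finally show ?thesis
    using assms F_eq[of a] by simp
qed

lemma diff_quotient_ge:
  assumes ty: "t \<in> {0..1}" "y \<in> {0..1}" "y \<noteq> t" and "q \<le> 1"
    and E: "E \<in> sets borel" "\<And>s. s \<in> E \<Longrightarrow> q < g s"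
    and small: "measure lebesgue (cball t \<bar>y - t\<bar> - E) \<le> \<delta> * \<bar>y - t\<bar>"
  shows "q - \<delta> \<le> (F y - F t) / (y - t)"
proof -
  define a b where "a = min t y" and "b = max t y"
  have ab: "0 \<le> a" "a < b" "b \<le> 1" "b - a = \<bar>y - t\<bar>"
    using ty by (auto simp: a_def b_def)
  have "(F y - F t) / (y - t) = (F b - F a) / (b - a)"
  proof (cases "t < y")
    case False
    then have "a = y" "b = t"
      by (auto simp: a_def b_def)
    then show ?thesis
      by (metis minus_diff_eq minus_divide_divide)
  qed (simp add: a_def b_def)
  also have "F b - F a = set_lebesgue_integral lborel {a<..b} g"
    using ab by (intro diff_eq_set_integral) auto
  finally have quot: "(F y - F t) / (y - t) = set_lebesgue_integral lborel {a<..b} g / (b - a)" .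
  have "{a<..b} - {s. q < g s} \<subseteq> cball t \<bar>y - t\<bar> - E"
    using E(2) by (auto simp: a_def b_def dist_real_def)
  then have "measure lborel ({a<..b} - {s. q < g s}) \<le> measure lborel (cball t \<bar>y - t\<bar> - E)"
    using measurable_g E(1) by (intro measure_mono_fmeasurable fmeasurable_Diff)
      (auto simp: cball_eq_atLeastAtMost fmeasurable_def emeasure_lborel_Icc_eq)
  moreover have "q * measure lborel {a<..b} - measure lborel ({a<..b} - {s. q < g s})
      \<le> set_lebesgue_integral lborel {a<..b} g"
  proof (rule set_integral_ge_superlevel_set)
    show "set_integrable lborel {a<..b} g"
      using ab by (intro set_integrable_unit_interval[OF measurable_g bounds_g]) auto
    show "AE s in lborel. s \<in> {a<..b} \<longrightarrow> 0 \<le> g s"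
      using bounds_g by eventually_elim (use ab in auto)
  qed (use measurable_g \<open>q \<le> 1\<close> ab in auto)
  moreover have "measure lebesgue (cball t \<bar>y - t\<bar> - E) = measure lborel (cball t \<bar>y - t\<bar> - E)"
    using E(1) by simp
  ultimately have "(q - \<delta>) * (b - a) \<le> set_lebesgue_integral lborel {a<..b} g"
    using small ab by (simp add: algebra_simps)
  then show ?thesis
    unfolding quot using ab by (simp add: field_simps)
qed

lemma diff_quotient_eventually_ge:
  assumes t: "t \<in> {0<..<1}" and "q \<le> 1"
    and E: "E \<in> sets borel" "\<And>s. s \<in> E \<Longrightarrow> q < g s"
    and density_point: "\<forall>\<^sub>F d in at_right 0.
      measure lebesgue (cball t d - E) \<le> \<delta> / 2 * measure lebesgue (cball t d)"
  shows "\<forall>\<^sub>F y in at t. q - \<delta> \<le> (F y - F t) / (y - t)"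
proof -
  obtain r where r: "r > 0" "\<And>d. 0 < d \<Longrightarrow> d < r \<Longrightarrow>
      measure lebesgue (cball t d - E) \<le> \<delta> / 2 * measure lebesgue (cball t d)"
    using density_point by (auto simp: eventually_at_right_field)
  show ?thesis
    unfolding eventually_at ball_UNIV
  proof (intro exI[of _ "min r (min t (1 - t))"] conjI allI impI)
    fix y
    assume y: "y \<noteq> t \<and> dist y t < min r (min t (1 - t))"
    show "q - \<delta> \<le> (F y - F t) / (y - t)"
    proof (rule diff_quotient_ge)
      show "measure lebesgue (cball t \<bar>y - t\<bar> - E) \<le> \<delta> * \<bar>y - t\<bar>"
        using y r(2)[of "\<bar>y - t\<bar>"] measure_cball_real[of "\<bar>y - t\<bar>" t]
        by (simp add: dist_real_def)
    qed (use t y E \<open>q \<le> 1\<close> in \<open>auto simp: dist_real_def\<close>)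
  qed (use r t in auto)
qed

lemma AE_diff_quotient_lower:
  "AE t in lborel. t \<in> {0<..<1} \<longrightarrow> (\<forall>\<epsilon>>0. \<forall>\<^sub>F y in at t. g t - \<epsilon> < (F y - F t) / (y - t))"
proof -
  define E where "E q = {t \<in> {0..1}. q < g t}" for q
  have E: "E q \<in> sets borel" "E q \<in> lmeasurable" for q
    using measurable_g by (auto simp: E_def intro: fmeasurableI2[of "{0..1}"])
  have "AE t in lborel. \<forall>q\<in>\<rat>. t \<in> E q \<longrightarrow> (\<forall>k>0. \<forall>\<^sub>F d in at_right 0.
           measure lebesgue (cball t d - E q) \<le> k * measure lebesgue (cball t d))"
    by (intro AE_ball_countable' countable_rat AE_density_point E)
  then show ?thesis
    using bounds_g
  proof eventually_elim
    case (elim t)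
    show ?case
    proof (intro impI allI)
      fix \<epsilon> :: real
      assume t: "t \<in> {0<..<1}" and "\<epsilon> > 0"
      obtain q where q: "q \<in> \<rat>" "g t - \<epsilon> / 2 < q" "q < g t"
        using Rats_dense_in_real[of "g t - \<epsilon> / 2" "g t"] \<open>\<epsilon> > 0\<close> by auto
      then have "q \<le> 1" "t \<in> E q"
        using elim(2) t by (auto simp: E_def)
      moreover have "\<epsilon> / 2 / 2 > 0"
        using \<open>\<epsilon> > 0\<close> by simp
      ultimately have "\<forall>\<^sub>F d in at_right 0.
          measure lebesgue (cball t d - E q) \<le> \<epsilon> / 2 / 2 * measure lebesgue (cball t d)"
        using elim(1) q(1) by blast
      moreover have "\<And>s. s \<in> E q \<Longrightarrow> q < g s"
        by (simp add: E_def)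
      ultimately have "\<forall>\<^sub>F y in at t. q - \<epsilon> / 2 \<le> (F y - F t) / (y - t)"
        using diff_quotient_eventually_ge[OF t \<open>q \<le> 1\<close> E(1)] by blast
      then show "\<forall>\<^sub>F y in at t. g t - \<epsilon> < (F y - F t) / (y - t)"
        by eventually_elim (use q(2) in linarith)
    qed
  qed
qed

text \<open>The upper bound is the lower bound for \<open>1 - g\<close>, whose indefinite integral is \<open>s - F s\<close>.\<close>

lemma AE_diff_quotient_upper:
  "AE t in lborel. t \<in> {0<..<1} \<longrightarrow> (\<forall>\<epsilon>>0. \<forall>\<^sub>F y in at t. (F y - F t) / (y - t) < g t + \<epsilon>)"
proof -
  interpret complement: indefinite_integral_unit_interval "\<lambda>t. 1 - g t" "\<lambda>s. s - F s"
  proof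
    show "(\<lambda>t. 1 - g t) \<in> borel_measurable lborel"
      "AE t in lborel. t \<in> {0..1} \<longrightarrow> 0 \<le> 1 - g t \<and> 1 - g t \<le> 1"
      using measurable_g bounds_g by (auto elim!: eventually_mono)
    fix s :: real
    assume "s \<in> {0..1}"
    moreover have "set_integrable lborel {0..s} g" "set_integrable lborel {0..s} (\<lambda>_. 1::real)"
      using \<open>s \<in> {0..1}\<close> by (auto intro!: set_integrable_unit_interval[OF measurable_g bounds_g]
          set_integrable_unit_interval)
    ultimately show "s - F s = set_lebesgue_integral lborel {0..s} (\<lambda>t. 1 - g t)"
      using F_eq[of s] by (simp add: set_integral_const)
  qed
  have flip: "(y - F y - (t - F t)) / (y - t) = 1 - (F y - F t) / (y - t)" if "y \<noteq> t" for y t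
    using that by (simp add: field_simps)
  show ?thesis
    using complement.AE_diff_quotient_lower
  proof eventually_elim
    case (elim t)
    show ?case
    proof (intro impI allI)
      fix \<epsilon> :: real
      assume "t \<in> {0<..<1}" "\<epsilon> > 0"
      then have "\<forall>\<^sub>F y in at t. y \<noteq> t \<and> 1 - g t - \<epsilon> < (y - F y - (t - F t)) / (y - t)"
        using elim by (simp add: eventually_conj eventually_neq_at_within)
      then show "\<forall>\<^sub>F y in at t. (F y - F t) / (y - t) < g t + \<epsilon>"
        by eventually_elim (auto simp: flip)
    qed
  qed
qed

lemma AE_has_real_derivative: "AE t in lborel. t \<in> {0<..<1} \<longrightarrow> (F has_real_derivative g t) (at t)"
  using AE_diff_quotient_lower AE_diff_quotient_upper
  by eventually_elim (blast intro: has_real_derivative_if_diff_quotient_bounds)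

end

section \<open>Lebesgue measure on Euclidean spaces and their products\<close>

lemma measure_eqI_atMost:
  fixes M N :: "'a::ordered_euclidean_space measure"
  assumes sets: "sets M = sets borel" "sets N = sets borel"
    and fin: "\<And>a. emeasure M {..a} < \<infinity>"
    and eq: "\<And>a. emeasure M {..a} = emeasure N {..a}"
  shows "M = N"
proof (rule measure_eqI_generator_eq[where E="range atMost" and \<Omega>=UNIV and A="\<lambda>n. {..real n *\<^sub>R One}"])
  have "{..a} \<inter> {..b} = {..inf a b}" for a b :: 'a
    by (auto simp: le_inf_iff)
  then show "Int_stable (range (atMost :: 'a \<Rightarrow> 'a set))"
    by (auto simp: Int_stable_def)
  have "sets (borel :: 'a measure) = sigma_sets UNIV (range atMost)"
    by (subst borel_eq_atMost) simp
  then show "sets M = sigma_sets UNIV (range atMost)" "sets N = sigma_sets UNIV (range atMost)"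
    using sets by simp_all
  have "\<exists>n::nat. x \<le> real n *\<^sub>R One" for x :: 'a
  proof -
    obtain n :: nat where "norm x \<le> real n"
      using real_arch_simple by blast
    then have "x \<bullet> i \<le> real n" if "i \<in> Basis" for i
      using Basis_le_norm[OF that, of x] by simp
    then show ?thesis
      by (auto simp: eucl_le[where 'a='a])
  qed
  then show "(\<Union>n. {..real n *\<^sub>R (One :: 'a)}) = UNIV"
    by auto
qed (use fin eq in \<open>auto simp: less_top\<close>)

lemma emeasure_density_eq_set_integral:
  fixes h :: "'a \<Rightarrow> real"
  assumes h: "integrable M h" "\<And>x. 0 \<le> h x" and A: "A \<in> sets M"
  shows "emeasure (density M h) A = ennreal (set_lebesgue_integral M A h)"
proof -
  have "emeasure (density M h) A = (\<integral>\<^sup>+ x. ennreal (indicator A x * h x) \<partial>M)"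
    using h A by (subst emeasure_density) (auto intro!: nn_integral_cong split: split_indicator)
  also have "\<dots> = ennreal (set_lebesgue_integral M A h)"
    using h A integrable_mult_indicator[OF A h(1)]
    by (subst nn_integral_eq_integral) (auto simp: set_lebesgue_integral_def)
  finally show ?thesis .
qed

lemma AE_eq_if_set_integral_atMost_eq:
  fixes f g :: "'a::ordered_euclidean_space \<Rightarrow> real"
  assumes f: "integrable lborel f" and g: "integrable lborel g"
    and eq: "\<And>a. set_lebesgue_integral lborel {..a} f = set_lebesgue_integral lborel {..a} g"
  shows "AE x in lborel. f x = g x"
proof -
  define p where "p x = max (f x) 0 + max (- g x) 0" for x
  define q where "q x = max (g x) 0 + max (- f x) 0" for x
  have pq: "integrable lborel p" "integrable lborel q" "\<And>x. 0 \<le> p x" "\<And>x. 0 \<le> q x"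
    unfolding p_def q_def using f g by auto
  have diff: "p x - q x = f x - g x" for x
    by (simp add: p_def q_def max_def)
  have set_integrable: "set_integrable lborel {..a} h" if "integrable lborel h" for a and h :: "'a \<Rightarrow> real"
    using integrable_mult_indicator[of "{..a}" lborel h] that by (simp add: set_integrable_def)
  have "set_lebesgue_integral lborel {..a} p = set_lebesgue_integral lborel {..a} q" for a
  proof -
    have "set_lebesgue_integral lborel {..a} p - set_lebesgue_integral lborel {..a} q
        = set_lebesgue_integral lborel {..a} (\<lambda>x. p x - q x)"
      using set_integrable pq(1,2) by (intro set_integral_diff(2)[symmetric])
    also have "\<dots> = set_lebesgue_integral lborel {..a} (\<lambda>x. f x - g x)"
      by (simp only: diff)
    also have "\<dots> = set_lebesgue_integral lborel {..a} f - set_lebesgue_integral lborel {..a} g"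
      using set_integrable f g by (intro set_integral_diff(2))
    also have "\<dots> = 0"
      using eq by simp
    finally show ?thesis
      by simp
  qed
  then have "density lborel p = density lborel q"
    by (intro measure_eqI_atMost) (simp_all add: emeasure_density_eq_set_integral pq)
  then have "AE x in lborel. ennreal (p x) = ennreal (q x)"
    by (intro sigma_finite_measure.density_unique[OF sigma_finite_lborel]) (use pq in auto)
  then show ?thesis
  proof eventually_elim
    case (elim x)
    then have "p x = q x"
      using pq(3,4) by simp
    then show ?case
      using diff[of x] by simp
  qed
qed

lemma AE_lborel_swap:
  fixes P :: "'a::euclidean_space \<times> 'b::euclidean_space \<Rightarrow> bool"
  assumes "AE z in lborel. P z"
  shows "AE z in lborel. P (snd z, fst z)"
proof -
  have "AE z in lborel \<Otimes>\<^sub>M lborel. P z"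
    using assms by (simp only: lborel_prod)
  then have "AE z in distr (lborel \<Otimes>\<^sub>M lborel) (lborel \<Otimes>\<^sub>M lborel) (\<lambda>(x, y). (y, x)). P z"
    by (simp only: lborel_pair.distr_pair_swap[symmetric])
  then have "AE z in lborel \<Otimes>\<^sub>M lborel. P (case z of (x, y) \<Rightarrow> (y, x))"
    by (rule AE_distrD[OF measurable_pair_swap'])
  then have "AE z in lborel \<Otimes>\<^sub>M lborel. P (snd z, fst z)"
    by (simp add: case_prod_beta)
  then show ?thesis
    unfolding lborel_prod .
qed

lemma (in pair_sigma_finite) AE_pair_measure_fst_snd:
  assumes "AE x in M1. P x" "AE y in M2. Q y"
  shows "AE z in M1 \<Otimes>\<^sub>M M2. P (fst z) \<and> Q (snd z)"
proof -
  obtain N1 N2 where N: "{x \<in> space M1. \<not> P x} \<subseteq> N1" "N1 \<in> null_sets M1"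
      "{y \<in> space M2. \<not> Q y} \<subseteq> N2" "N2 \<in> null_sets M2"
    using assms by (auto elim!: AE_E)
  have [measurable]: "N1 \<in> sets M1" "N2 \<in> sets M2"
    using N by auto
  have "AE z in M1 \<Otimes>\<^sub>M M2. fst z \<notin> N1 \<and> snd z \<notin> N2"
  proof (rule AE_pair_measure)
    show "AE x in M1. AE y in M2. fst (x, y) \<notin> N1 \<and> snd (x, y) \<notin> N2"
      using AE_not_in[OF N(2)]
    proof eventually_elim
      case (elim x)
      show ?case
        using AE_not_in[OF N(4)] by eventually_elim (simp add: elim)
    qed
  qed measurable
  with AE_space show ?thesis
  proof eventually_elim
    case (elim z)
    then show ?case
      using N(1,3) by (auto simp: space_pair_measure)
  qed
qed

lemma nn_integral_lborel_prod_mult: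
  fixes A :: "'a::euclidean_space \<Rightarrow> ennreal" and B :: "'b::euclidean_space \<Rightarrow> ennreal"
  assumes [measurable]: "A \<in> borel_measurable borel" "B \<in> borel_measurable borel"
  shows "(\<integral>\<^sup>+ z. A (fst z) * B (snd z) \<partial>lborel) = (\<integral>\<^sup>+ x. A x \<partial>lborel) * (\<integral>\<^sup>+ y. B y \<partial>lborel)"
proof -
  have "(\<integral>\<^sup>+ z. A (fst z) * B (snd z) \<partial>lborel) = (\<integral>\<^sup>+ x. (\<integral>\<^sup>+ y. A x * B y \<partial>lborel) \<partial>lborel)"
    by (simp add: lborel_prod[symmetric] lborel.nn_integral_fst[symmetric])
  also have "\<dots> = (\<integral>\<^sup>+ x. A x \<partial>lborel) * (\<integral>\<^sup>+ y. B y \<partial>lborel)"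
    by (simp add: nn_integral_cmult nn_integral_multc)
  finally show ?thesis .
qed

lemma integral_lborel_prod_mult:
  fixes f :: "'a::euclidean_space \<Rightarrow> real" and g :: "'b::euclidean_space \<Rightarrow> real"
  assumes f: "integrable lborel f" and g: "integrable lborel g"
  shows "(\<integral>z. f (fst z) * g (snd z) \<partial>lborel) = (\<integral>x. f x \<partial>lborel) * (\<integral>y. g y \<partial>lborel)"
proof -
  have [measurable]: "f \<in> borel_measurable borel" "g \<in> borel_measurable borel"
    using f g by auto
  have "(\<integral>\<^sup>+ z. ennreal (norm (f (fst z) * g (snd z))) \<partial>lborel)
      = (\<integral>\<^sup>+ x. ennreal (norm (f x)) \<partial>lborel) * (\<integral>\<^sup>+ y. ennreal (norm (g y)) \<partial>lborel)"
    by (simp add: abs_mult ennreal_mult) (intro nn_integral_lborel_prod_mult; measurable)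
  also have "\<dots> < \<infinity>"
    using f g by (simp add: integrable_iff_bounded ennreal_mult_less_top)
  moreover have "(\<lambda>z. f (fst z) * g (snd z)) \<in> borel_measurable (lborel \<Otimes>\<^sub>M lborel)"
    by measurable
  ultimately have "integrable lborel (\<lambda>z. f (fst z) * g (snd z))"
    by (intro integrableI_bounded) (simp_all add: lborel_prod)
  then have "integrable (lborel \<Otimes>\<^sub>M lborel) (\<lambda>(x, y). f x * g y)"
    by (simp add: lborel_prod case_prod_beta')
  then have "(\<integral>x. (\<integral>y. f x * g y \<partial>lborel) \<partial>lborel) = (\<integral>z. f (fst z) * g (snd z) \<partial>lborel)"
    using lborel_pair.integral_fst'[of "\<lambda>(x, y). f x * g y"] by (simp add: lborel_prod case_prod_beta')
  then show ?thesis
    by simp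
qed

lemma measurable_fst_lborel [measurable]:
  "fst \<in> (lborel :: ('a::euclidean_space \<times> 'b::euclidean_space) measure) \<rightarrow>\<^sub>M lborel"
  using measurable_fst[of "lborel :: 'a measure" "lborel :: 'b measure"] by (simp only: lborel_prod)

lemma measurable_snd_lborel [measurable]:
  "snd \<in> (lborel :: ('a::euclidean_space \<times> 'b::euclidean_space) measure) \<rightarrow>\<^sub>M lborel"
  using measurable_snd[of "lborel :: 'a measure" "lborel :: 'b measure"] by (simp only: lborel_prod)

lemma borel_measurable_completion_AE_cong:
  fixes f g :: "'a \<Rightarrow> 'b::topological_space"
  assumes g: "g \<in> borel_measurable (completion M)" and eq: "AE x in completion M. f x = g x"
  shows "f \<in> borel_measurable (completion M)"
proof (rule borel_measurableI)
  fix S :: "'b set"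
  assume "open S"
  then have sets: "g -` S \<inter> space (completion M) \<in> sets (completion M)"
    using measurable_sets[OF g, of S] by simp
  have "AE x in completion M. x \<in> g -` S \<inter> space (completion M) \<longleftrightarrow> x \<in> f -` S \<inter> space (completion M)"
    using eq by eventually_elim auto
  from completion.in_sets_AE[OF this sets] show "f -` S \<inter> space (completion M) \<in> sets (completion M)"
    by auto
qed

section \<open>Densities on the unit square\<close>

abbreviation unit_square :: "(real \<times> real) set" where
  "unit_square \<equiv> {0..1} \<times> {0..1}"

lemma is_density_swap:
  assumes "is_density C c"
  shows "is_density (\<lambda>x y. C y x) (\<lambda>z. c (snd z, fst z))"
proof -
  define c0 where "c0 z = indicator unit_square z * c z" for z
  have "integrable (lborel \<Otimes>\<^sub>M lborel) c0"
    using assms unfolding c0_def by (simp add: is_density_def set_integrable_def lborel_prod)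
  then have c0[measurable]: "c0 \<in> borel_measurable (lborel \<Otimes>\<^sub>M lborel)"
      "integrable (lborel \<Otimes>\<^sub>M lborel) (\<lambda>(x, y). c0 (y, x))"
    by (auto intro: lborel_pair.integrable_product_swap)
  have swap: "(\<lambda>(x, y). indicator ({0..a} \<times> {0..b}) (y, x) * c0 (y, x)) =
      (\<lambda>z. indicator ({0..b} \<times> {0..a}) z *\<^sub>R c (snd z, fst z))" if "a \<le> 1" "b \<le> 1" for a b
    using that by (auto simp: fun_eq_iff c0_def indicator_def)
  have "(\<lambda>(x, y). c0 (y, x)) = (\<lambda>z. indicator unit_square z * c (snd z, fst z))"
    by (auto simp: fun_eq_iff c0_def indicator_def)
  then have "set_integrable lborel unit_square (\<lambda>z. c (snd z, fst z))"
    using c0(2) by (simp add: set_integrable_def lborel_prod)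
  moreover have "C y x = set_lebesgue_integral lborel ({0..x} \<times> {0..y}) (\<lambda>z. c (snd z, fst z))"
    if "x \<in> {0..1}" "y \<in> {0..1}" for x y
  proof -
    have "C y x = (\<integral>z. indicator ({0..y} \<times> {0..x}) z * c0 z \<partial>(lborel \<Otimes>\<^sub>M lborel))"
      using assms that unfolding is_density_def set_lebesgue_integral_def lborel_prod
      by (auto intro!: Bochner_Integration.integral_cong simp: c0_def indicator_def)
    also have "\<dots> = (\<integral>(x', y'). indicator ({0..y} \<times> {0..x}) (y', x') * c0 (y', x') \<partial>(lborel \<Otimes>\<^sub>M lborel))"
      by (intro lborel_pair.integral_product_swap[symmetric]) measurable
    finally show ?thesis
      using that swap[of y x] by (simp add: set_lebesgue_integral_def lborel_prod)
  qed
  ultimately show ?thesis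
    by (simp add: is_density_def)
qed

lemma is_density_unique:
  assumes d1: "is_density D d1" and d2: "is_density D d2"
  shows "AE z in lborel. z \<in> unit_square \<longrightarrow> d1 z = d2 z"
proof -
  have box: "set_lebesgue_integral lborel {..p} (\<lambda>z. indicator unit_square z * d z) =
      set_lebesgue_integral lborel ({0..min (fst p) 1} \<times> {0..min (snd p) 1}) d"
    for p :: "real \<times> real" and d :: "real \<times> real \<Rightarrow> real"
    unfolding set_lebesgue_integral_def
    by (intro Bochner_Integration.integral_cong refl) (auto simp: indicator_def less_eq_prod_def mem_Times_iff)
  have "AE z in lborel. indicator unit_square z * d1 z = indicator unit_square z * d2 z"
  proof (rule AE_eq_if_set_integral_atMost_eq)
    show "integrable lborel (\<lambda>z. indicator unit_square z * d1 z)"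
      "integrable lborel (\<lambda>z. indicator unit_square z * d2 z)"
      using d1 d2 by (simp_all add: is_density_def set_integrable_def)
    fix p :: "real \<times> real"
    show "set_lebesgue_integral lborel {..p} (\<lambda>z. indicator unit_square z * d1 z) =
        set_lebesgue_integral lborel {..p} (\<lambda>z. indicator unit_square z * d2 z)"
    proof (cases "0 \<le> fst p \<and> 0 \<le> snd p")
      case True
      then show ?thesis
        using d1 d2 unfolding box is_density_def by simp
    next
      case False
      then have empty: "{0..min (fst p) 1} \<times> {0..min (snd p) 1} = {}"
        by auto
      show ?thesis
        unfolding box empty by (simp add: set_lebesgue_integral_def)
    qed
  qed
  then show ?thesis
    by eventually_elim (auto simp: indicator_def)
qed

lemma measure_lborel_box: "0 \<le> x \<Longrightarrow> 0 \<le> y \<Longrightarrow> measure lborel ({0..x::real} \<times> {0..y::real}) = x * y"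
  by (simp add: lborel_prod[symmetric] lborel.emeasure_pair_measure_Times measure_def ennreal_mult[symmetric])

lemma is_density_ge_mult:
  assumes d: "is_density D d" and lower: "AE z in lborel. z \<in> unit_square \<longrightarrow> b \<le> d z"
    and xy: "x \<in> {0..1}" "y \<in> {0..1}"
  shows "x * y * b \<le> D x y"
proof -
  let ?B = "{0..x} \<times> {0..y}"
  have B: "?B \<in> sets borel" "?B \<subseteq> unit_square" "measure lborel ?B = x * y"
    using xy by (auto simp: measure_lborel_box intro!: borel_closed closed_Times)
  then have "emeasure lborel ?B < \<infinity>"
    using xy by (simp add: lborel_prod[symmetric] lborel.emeasure_pair_measure_Times ennreal_mult_less_top)
  then have "x * y * b = set_lebesgue_integral lborel ?B (\<lambda>_. b)"
    using B by (simp add: set_integral_const)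
  also have "\<dots> \<le> set_lebesgue_integral lborel ?B d"
  proof (rule set_integral_mono_AE)
    show "set_integrable lborel ?B d"
      using d B by (auto simp: is_density_def intro: set_integrable_subset)
    show "AE z in lborel. z \<in> ?B \<longrightarrow> b \<le> d z"
      using lower by eventually_elim (use B in auto)
  qed (use B \<open>emeasure lborel ?B < \<infinity>\<close> in \<open>auto simp: set_integrable_def\<close>)
  also have "\<dots> = D x y"
    using d xy by (simp add: is_density_def)
  finally show ?thesis .
qed

locale uniform_margin_density =
  fixes D :: "real \<Rightarrow> real \<Rightarrow> real" and e :: "real \<times> real \<Rightarrow> real"
  assumes density: "is_density D e"
    and nonneg: "AE z in lborel. z \<in> unit_square \<longrightarrow> 0 \<le> e z"
    and margin: "\<And>s. s \<in> {0..1} \<Longrightarrow> D 1 s = s"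
begin

definition e_sq :: "real \<times> real \<Rightarrow> real" where
  "e_sq z = indicator unit_square z * e z"

text \<open>\<open>partial2 x\<close> is the almost-everywhere derivative of \<open>D x\<close>; the margin condition
  \<open>D 1 s = s\<close> bounds it by \<open>1\<close>, as required for differentiating its integral.\<close>

definition partial2 :: "real \<Rightarrow> real \<Rightarrow> real" where
  "partial2 x t = (\<integral>u. indicator {0..x} u * e_sq (u, t) \<partial>lborel)"

lemma integrable_e_sq: "integrable lborel e_sq" "integrable (lborel \<Otimes>\<^sub>M lborel) e_sq"
  using density unfolding e_sq_def by (simp_all add: is_density_def set_integrable_def lborel_prod)

lemma borel_measurable_e_sq [measurable]:
  "e_sq \<in> borel_measurable borel" "e_sq \<in> borel_measurable (lborel \<Otimes>\<^sub>M lborel)"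
  using integrable_e_sq by auto

lemma e_sq_outside: "z \<notin> unit_square \<Longrightarrow> e_sq z = 0"
  by (simp add: e_sq_def)

lemma AE_e_sq_nonneg: "AE z in lborel. 0 \<le> e_sq z"
  using nonneg by eventually_elim (simp add: e_sq_def indicator_def)

lemma AE_slice_integrable: "AE t in lborel. integrable lborel (\<lambda>u. e_sq (u, t))"
  using lborel_pair.AE_integrable_snd[of "\<lambda>u t. e_sq (u, t)"] integrable_e_sq by simp

lemma AE_slice_nonneg: "AE t in lborel. AE u in lborel. 0 \<le> e_sq (u, t)"
proof -
  have "AE z in lborel \<Otimes>\<^sub>M lborel. 0 \<le> e_sq (snd z, fst z)"
    using AE_lborel_swap[OF AE_e_sq_nonneg] by (simp only: lborel_prod)
  then show ?thesis
    using lborel_pair.AE_pair by fastforce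
qed

lemma borel_measurable_partial2 [measurable]: "partial2 x \<in> borel_measurable borel"
  unfolding partial2_def by measurable

lemma partial2_outside: "t \<notin> {0..1} \<Longrightarrow> partial2 x t = 0"
  by (simp add: partial2_def e_sq_outside)

lemma D_eq_set_integral_partial2:
  assumes "x \<in> {0..1}" "s \<in> {0..1}"
  shows "set_integrable lborel {0..s} (partial2 x)" "D x s = set_lebesgue_integral lborel {0..s} (partial2 x)"
proof -
  define \<phi> where "\<phi> u t = indicator {0..x} u * indicator {0..s} t * e_sq (u, t)" for u t
  have \<phi>_eq: "case_prod \<phi> = (\<lambda>z. indicator ({0..x} \<times> {0..s}) z * e_sq z)"
    by (auto simp: \<phi>_def fun_eq_iff indicator_times)
  have \<phi>: "integrable (lborel \<Otimes>\<^sub>M lborel) (case_prod \<phi>)"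
    unfolding \<phi>_eq using integrable_mult_indicator[OF _ integrable_e_sq(2)] by simp
  have inner: "(\<integral>u. \<phi> u t \<partial>lborel) = indicator {0..s} t * partial2 x t" for t
    unfolding \<phi>_def partial2_def by (simp add: mult_ac)
  show "set_integrable lborel {0..s} (partial2 x)"
    using lborel_pair.integrable_snd[OF \<phi>] by (simp add: inner set_integrable_def)
  have "D x s = set_lebesgue_integral lborel ({0..x} \<times> {0..s}) e"
    using density assms by (simp add: is_density_def)
  also have "\<dots> = integral\<^sup>L (lborel \<Otimes>\<^sub>M lborel) (case_prod \<phi>)"
    unfolding set_lebesgue_integral_def \<phi>_eq lborel_prod using assms
    by (intro Bochner_Integration.integral_cong refl) (auto simp: e_sq_def indicator_def)
  also have "\<dots> = (\<integral>t. (\<integral>u. \<phi> u t \<partial>lborel) \<partial>lborel)"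
    using lborel_pair.integral_snd[OF \<phi>] by simp
  finally show "D x s = set_lebesgue_integral lborel {0..s} (partial2 x)"
    by (simp add: inner set_lebesgue_integral_def)
qed

lemma AE_partial2_one: "AE t in lborel. t \<in> {0..1} \<longrightarrow> partial2 1 t = 1"
proof -
  have "AE t in lborel. indicator {0..1} t * partial2 1 t = indicator {0..1::real} t"
  proof (rule AE_eq_if_set_integral_atMost_eq)
    show "integrable lborel (\<lambda>t. indicator {0..1} t * partial2 1 t)"
      using D_eq_set_integral_partial2(1)[of 1 1] by (simp add: set_integrable_def)
    fix a :: real
    have restrict: "set_lebesgue_integral lborel {..a} (\<lambda>t. indicator {0..1} t * h t) =
        set_lebesgue_integral lborel {0..min a 1} h" for h :: "real \<Rightarrow> real"
      unfolding set_lebesgue_integral_def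
      by (intro Bochner_Integration.integral_cong refl) (auto simp: indicator_def)
    show "set_lebesgue_integral lborel {..a} (\<lambda>t. indicator {0..1} t * partial2 1 t) =
        set_lebesgue_integral lborel {..a} (indicator {0..1})"
      using restrict[of "partial2 1"] restrict[of "\<lambda>_. 1"]
        D_eq_set_integral_partial2(2)[of 1 "min a 1"] margin[of "min a 1"]
      by (cases "0 \<le> a") (simp_all add: set_lebesgue_integral_def)
  qed simp
  then show ?thesis
    by eventually_elim (simp add: indicator_def)
qed

lemma AE_partial2_bounds:
  assumes "x \<in> {0..1}"
  shows "AE t in lborel. t \<in> {0..1} \<longrightarrow> 0 \<le> partial2 x t \<and> partial2 x t \<le> 1"
  using AE_slice_integrable AE_slice_nonneg AE_partial2_one
proof eventually_elim
  case (elim t)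
  have integrable: "integrable lborel (\<lambda>u. indicator {0..a} u * e_sq (u, t))" for a :: real
    using integrable_mult_indicator[OF _ elim(1), of "{0..a}"] by simp
  have "0 \<le> partial2 x t"
    unfolding partial2_def using elim(2) by (intro integral_nonneg_AE) (auto elim: eventually_mono)
  moreover have "partial2 x t \<le> partial2 1 t"
    unfolding partial2_def
  proof (rule integral_mono_AE)
    show "AE u in lborel. indicator {0..x} u * e_sq (u, t) \<le> indicator {0..1} u * e_sq (u, t)"
      using elim(2) by eventually_elim (use assms in \<open>auto simp: indicator_def\<close>)
  qed (rule integrable)+
  ultimately show ?case
    using elim(3) by auto
qed

lemma AE_deriv_eq_partial2:
  assumes "x \<in> {0..1}"
  shows "AE t in lborel. t \<in> {0<..<1} \<longrightarrow> deriv (D x) t = partial2 x t"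
proof -
  have "AE t in lborel. t \<in> {0<..<1} \<longrightarrow> (D x has_real_derivative partial2 x t) (at t)"
    using D_eq_set_integral_partial2(2)[OF assms]
    by (intro indefinite_integral_unit_interval.AE_has_real_derivative
        indefinite_integral_unit_interval.intro AE_partial2_bounds assms) auto
  then show ?thesis
    by eventually_elim (auto intro: DERIV_imp_deriv)
qed

lemma AE_nn_integral_slice: "AE t in lborel. (\<integral>\<^sup>+u. ennreal (norm (e_sq (u, t))) \<partial>lborel) = indicator {0..1} t"
  using AE_slice_integrable AE_slice_nonneg AE_partial2_one
proof eventually_elim
  case (elim t)
  show ?case
  proof (cases "t \<in> {0..1}")
    case True
    have "(\<integral>\<^sup>+u. ennreal (norm (e_sq (u, t))) \<partial>lborel) = (\<integral>\<^sup>+u. ennreal (e_sq (u, t)) \<partial>lborel)"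
      using elim(2) by (intro nn_integral_cong_AE) (auto elim: eventually_mono)
    also have "\<dots> = ennreal (\<integral>u. e_sq (u, t) \<partial>lborel)"
      using elim(1,2) by (rule nn_integral_eq_integral)
    also have "(\<integral>u. e_sq (u, t) \<partial>lborel) = partial2 1 t"
      unfolding partial2_def by (intro Bochner_Integration.integral_cong refl) (auto simp: e_sq_def indicator_def)
    finally show ?thesis
      using True elim(3) by simp
  qed (simp add: e_sq_outside)
qed

lemma AE_slice_ge:
  assumes "AE z in lborel. z \<in> unit_square \<longrightarrow> a \<le> e z"
  shows "AE u in lborel. AE t in lborel. (u, t) \<in> unit_square \<longrightarrow> a \<le> e_sq (u, t)"
proof -
  have "AE z in lborel \<Otimes>\<^sub>M lborel. z \<in> unit_square \<longrightarrow> a \<le> e_sq z"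
    using assms unfolding lborel_prod by eventually_elim (simp add: e_sq_def)
  then show ?thesis
    by (rule lborel_pair.AE_pair)
qed

end

section \<open>The fold product of two densities\<close>

locale fold_prod_densities =
  fixes D :: "real \<Rightarrow> real \<Rightarrow> real" and e :: "real \<times> real \<Rightarrow> real"
    and C :: "real \<Rightarrow> real \<Rightarrow> real" and c :: "real \<times> real \<Rightarrow> real"
  assumes density_D: "is_density D e" and density_C: "is_density C c"
    and nonneg_D: "AE z in lborel. z \<in> unit_square \<longrightarrow> 0 \<le> e z"
    and nonneg_C: "AE z in lborel. z \<in> unit_square \<longrightarrow> 0 \<le> c z"
    and margins_D: "\<And>s. s \<in> {0..1} \<Longrightarrow> D 1 s = s" "\<And>s. s \<in> {0..1} \<Longrightarrow> D s 1 = s"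
    and margins_C: "\<And>s. s \<in> {0..1} \<Longrightarrow> C 1 s = s" "\<And>s. s \<in> {0..1} \<Longrightarrow> C s 1 = s"
begin

sublocale D: uniform_margin_density D e
  using density_D nonneg_D margins_D(1) by unfold_locales

text \<open>\<open>C\<^sub>,\<^sub>1(t, y)\<close> is the second partial derivative of the transpose of \<open>C\<close>.\<close>

sublocale C: uniform_margin_density "\<lambda>x y. C y x" "\<lambda>z. c (snd z, fst z)"
proof
  show "is_density (\<lambda>x y. C y x) (\<lambda>z. c (snd z, fst z))"
    by (rule is_density_swap[OF density_C])
  show "AE z in lborel. z \<in> unit_square \<longrightarrow> 0 \<le> c (snd z, fst z)"
    using AE_lborel_swap[OF nonneg_C] by eventually_elim auto
qed (rule margins_C(2))

definition fold_density :: "real \<times> real \<Rightarrow> real" where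
  "fold_density z = (\<integral>t. D.e_sq (fst z, t) * C.e_sq (snd z, t) \<partial>lborel)"

lemma integrable_fold_integrand:
  "integrable (lborel \<Otimes>\<^sub>M lborel) (\<lambda>(z, t). D.e_sq (fst z, t) * C.e_sq (snd z, t))"
proof (rule integrableI_bounded)
  show "(\<lambda>(z, t). D.e_sq (fst z, t) * C.e_sq (snd z, t)) \<in> borel_measurable (lborel \<Otimes>\<^sub>M lborel)"
    by measurable
  have "(\<integral>\<^sup>+ p. ennreal (norm (case p of (z, t) \<Rightarrow> D.e_sq (fst z, t) * C.e_sq (snd z, t)))
          \<partial>(lborel \<Otimes>\<^sub>M lborel))
      = (\<integral>\<^sup>+ t. (\<integral>\<^sup>+ z. ennreal (norm (D.e_sq (fst z, t) * C.e_sq (snd z, t))) \<partial>lborel) \<partial>lborel)"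
    by (subst lborel_pair.nn_integral_snd[symmetric]) (auto simp: case_prod_beta)
  also have "\<dots> = (\<integral>\<^sup>+ t. indicator {0..1::real} t \<partial>lborel)"
  proof -
    have slices: "AE t in lborel. (\<integral>\<^sup>+ z. ennreal (norm (D.e_sq (fst z, t) * C.e_sq (snd z, t))) \<partial>lborel) =
        indicator {0..1} t"
      using D.AE_nn_integral_slice C.AE_nn_integral_slice
    proof eventually_elim
      case (elim t)
      have "(\<integral>\<^sup>+ z. ennreal (norm (D.e_sq (fst z, t) * C.e_sq (snd z, t))) \<partial>lborel) =
          (\<integral>\<^sup>+ u. ennreal (norm (D.e_sq (u, t))) \<partial>lborel) * (\<integral>\<^sup>+ v. ennreal (norm (C.e_sq (v, t))) \<partial>lborel)"
        by (simp add: abs_mult ennreal_mult) (intro nn_integral_lborel_prod_mult; measurable)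
      then show ?case
        using elim by (simp split: split_indicator)
    qed
    show ?thesis
      by (rule nn_integral_cong_AE[OF slices])
  qed
  also have "\<dots> = 1"
    by simp
  finally show "(\<integral>\<^sup>+ p. ennreal (norm (case p of (z, t) \<Rightarrow> D.e_sq (fst z, t) * C.e_sq (snd z, t)))
      \<partial>(lborel \<Otimes>\<^sub>M lborel)) < \<infinity>"
    by simp
qed

lemma integrable_fold_density: "integrable lborel fold_density"
  using lborel_pair.integrable_fst'[OF integrable_fold_integrand] unfolding fold_density_def by simp

lemma fold_prod_eq_integral_partial2:
  assumes x: "x \<in> {0..1}" and y: "y \<in> {0..1}"
  shows "fold_prod D C x y = (\<integral>t. D.partial2 x t * C.partial2 y t \<partial>lborel)"
proof -
  define \<phi> where "\<phi> t = indicator {0..1} t *\<^sub>R (deriv (D x) t * deriv (\<lambda>s. C s y) t)" for t :: real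
  define \<psi> where "\<psi> t = D.partial2 x t * C.partial2 y t" for t
  have \<psi>[measurable]: "\<psi> \<in> borel_measurable lborel"
    unfolding \<psi>_def by measurable
  have "AE t in lborel. \<phi> t = \<psi> t"
    using D.AE_deriv_eq_partial2[OF x] C.AE_deriv_eq_partial2[OF y]
      AE_lborel_singleton[of 0] AE_lborel_singleton[of 1]
  proof eventually_elim
    case (elim t)
    show ?case
    proof (cases "t \<in> {0..1}")
      case True
      then show ?thesis
        using elim by (simp add: \<phi>_def \<psi>_def)
    qed (simp add: \<phi>_def \<psi>_def D.partial2_outside)
  qed
  then have ae: "AE t in lebesgue. \<phi> t = \<psi> t"
    by (rule AE_completion)
  have \<psi>': "\<psi> \<in> borel_measurable lebesgue"
    by (simp add: measurable_completion)
  have "fold_prod D C x y = integral\<^sup>L lebesgue \<phi>"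
    unfolding fold_prod_def set_lebesgue_integral_def \<phi>_def by simp
  also have "\<dots> = integral\<^sup>L lebesgue \<psi>"
    using borel_measurable_completion_AE_cong[OF \<psi>' ae] \<psi>' ae by (rule integral_cong_AE)
  also have "\<dots> = integral\<^sup>L lborel \<psi>"
    by (intro integral_completion) simp
  finally show ?thesis
    unfolding \<psi>_def .
qed

lemma set_integral_fold_density_box:
  assumes x: "x \<in> {0..1}" and y: "y \<in> {0..1}"
  shows "set_lebesgue_integral lborel ({0..x} \<times> {0..y}) fold_density =
    (\<integral>t. D.partial2 x t * C.partial2 y t \<partial>lborel)"
proof -
  have [measurable]: "{0..x} \<times> {0..y} \<in> sets (borel :: (real \<times> real) measure)"
    by (intro borel_closed closed_Times) auto
  define \<psi> where "\<psi> z t = indicator ({0..x} \<times> {0..y}) z * (D.e_sq (fst z, t) * C.e_sq (snd z, t))"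
    for z :: "real \<times> real" and t
  have \<psi>[measurable]: "case_prod \<psi> \<in> borel_measurable (lborel \<Otimes>\<^sub>M lborel)"
    unfolding \<psi>_def by measurable
  have "integrable (lborel \<Otimes>\<^sub>M lborel) (case_prod \<psi>)"
    by (rule Bochner_Integration.integrable_bound[OF integrable_fold_integrand \<psi>])
      (auto simp: \<psi>_def indicator_def abs_mult)
  then have "(\<integral>z. (\<integral>t. \<psi> z t \<partial>lborel) \<partial>lborel) = (\<integral>t. (\<integral>z. \<psi> z t \<partial>lborel) \<partial>lborel)"
    by (rule lborel_pair.Fubini_integral[symmetric])
  moreover have "(\<integral>z. (\<integral>t. \<psi> z t \<partial>lborel) \<partial>lborel) = set_lebesgue_integral lborel ({0..x} \<times> {0..y}) fold_density"
    by (simp add: \<psi>_def fold_density_def set_lebesgue_integral_def)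
  moreover have "(\<integral>t. (\<integral>z. \<psi> z t \<partial>lborel) \<partial>lborel) = (\<integral>t. D.partial2 x t * C.partial2 y t \<partial>lborel)"
  proof (rule integral_cong_AE)
    show "AE t in lborel. (\<integral>z. \<psi> z t \<partial>lborel) = D.partial2 x t * C.partial2 y t"
      using D.AE_slice_integrable C.AE_slice_integrable
    proof eventually_elim
      case (elim t)
      have "\<psi> z t = (indicator {0..x} (fst z) * D.e_sq (fst z, t)) *
          (indicator {0..y} (snd z) * C.e_sq (snd z, t))" for z
        by (simp add: \<psi>_def indicator_times mult_ac)
      moreover have "integrable lborel (\<lambda>u. indicator {0..x} u * D.e_sq (u, t))"
          "integrable lborel (\<lambda>v. indicator {0..y} v * C.e_sq (v, t))"
        using integrable_mult_indicator[OF _ elim(1), of "{0..x}"]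
          integrable_mult_indicator[OF _ elim(2), of "{0..y}"] by simp_all
      ultimately show ?case
        using integral_lborel_prod_mult by (simp add: D.partial2_def C.partial2_def)
    qed
  qed measurable
  ultimately show ?thesis
    by simp
qed

lemma fold_prod_margins:
  assumes "s \<in> {0..1}"
  shows "fold_prod D C 1 s = s" "fold_prod D C s 1 = s"
proof -
  have "AE t in lborel. D.partial2 1 t * C.partial2 s t = indicator {0..1} t * C.partial2 s t"
    using D.AE_partial2_one by eventually_elim (auto simp: C.partial2_outside indicator_def)
  then have "(\<integral>t. D.partial2 1 t * C.partial2 s t \<partial>lborel) = (\<integral>t. indicator {0..1} t * C.partial2 s t \<partial>lborel)"
    by (rule integral_cong_AE[rotated 2]) measurable
  then have "fold_prod D C 1 s = (\<integral>t. indicator {0..1} t * C.partial2 s t \<partial>lborel)"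
    using assms by (simp add: fold_prod_eq_integral_partial2)
  also have "\<dots> = C 1 s"
    using C.D_eq_set_integral_partial2(2)[OF assms, of 1] by (simp add: set_lebesgue_integral_def)
  finally show "fold_prod D C 1 s = s"
    using margins_C(1)[OF assms] by simp
  have "AE t in lborel. D.partial2 s t * C.partial2 1 t = indicator {0..1} t * D.partial2 s t"
    using C.AE_partial2_one by eventually_elim (auto simp: D.partial2_outside indicator_def)
  then have "(\<integral>t. D.partial2 s t * C.partial2 1 t \<partial>lborel) = (\<integral>t. indicator {0..1} t * D.partial2 s t \<partial>lborel)"
    by (rule integral_cong_AE[rotated 2]) measurable
  then have "fold_prod D C s 1 = (\<integral>t. indicator {0..1} t * D.partial2 s t \<partial>lborel)"
    using assms by (simp add: fold_prod_eq_integral_partial2)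
  also have "\<dots> = D s 1"
    using D.D_eq_set_integral_partial2(2)[OF assms, of 1] by (simp add: set_lebesgue_integral_def)
  finally show "fold_prod D C s 1 = s"
    using margins_D(2)[OF assms] by simp
qed

lemma is_density_fold_prod: "is_density (fold_prod D C) fold_density"
proof -
  have "unit_square \<in> sets (borel :: (real \<times> real) measure)"
    by (intro borel_closed closed_Times) auto
  then have "set_integrable lborel unit_square fold_density"
    using integrable_mult_indicator[OF _ integrable_fold_density] by (simp add: set_integrable_def)
  then show ?thesis
    by (simp add: is_density_def fold_prod_eq_integral_partial2 set_integral_fold_density_box)
qed

lemma AE_fold_density_ge:
  assumes lower_e: "AE z in lborel. z \<in> unit_square \<longrightarrow> a \<le> e z"
    and lower_c: "AE z in lborel. z \<in> unit_square \<longrightarrow> b \<le> c z"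
    and "0 \<le> a" "0 \<le> b"
  shows "AE z in lborel. z \<in> unit_square \<longrightarrow> a * b \<le> fold_density z"
proof -
  have "AE z in lborel. z \<in> unit_square \<longrightarrow> b \<le> c (snd z, fst z)"
    using AE_lborel_swap[OF lower_c] by eventually_elim auto
  note AE_C = C.AE_slice_ge[OF this]
  have "AE z in lborel. (AE t in lborel. (fst z, t) \<in> unit_square \<longrightarrow> a \<le> D.e_sq (fst z, t)) \<and>
      (AE t in lborel. (snd z, t) \<in> unit_square \<longrightarrow> b \<le> C.e_sq (snd z, t))"
    using lborel_pair.AE_pair_measure_fst_snd[OF D.AE_slice_ge[OF lower_e] AE_C] unfolding lborel_prod .
  with lborel_pair.AE_integrable_fst'[OF integrable_fold_integrand] show ?thesis
  proof eventually_elim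
    case (elim z)
    show ?case
    proof
      assume z: "z \<in> unit_square"
      have bound: "AE t in lborel. indicator {0..1} t * (a * b) \<le> D.e_sq (fst z, t) * C.e_sq (snd z, t)"
        using conjunct1[OF elim(2)] conjunct2[OF elim(2)]
      proof eventually_elim
        case (elim t)
        show ?case
        proof (cases "t \<in> {0..1}")
          case True
          then show ?thesis
            using elim z \<open>0 \<le> a\<close> \<open>0 \<le> b\<close> by (auto simp: mem_Times_iff intro: mult_mono)
        qed (simp add: D.e_sq_outside)
      qed
      have "integrable lborel (\<lambda>t. indicator {0..1::real} t * (a * b))"
          "integrable lborel (\<lambda>t. D.e_sq (fst z, t) * C.e_sq (snd z, t))"
        using elim(1) by simp_all
      then have "(\<integral>t. indicator {0..1::real} t * (a * b) \<partial>lborel) \<le> fold_density z"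
        unfolding fold_density_def using bound by (rule integral_mono_AE)
      then show "a * b \<le> fold_density z"
        by simp
    qed
  qed
qed

end

section \<open>Iterated fold products\<close>

lemma is_copula_margins:
  assumes "is_copula C" "s \<in> {0..1}"
  shows "C 1 s = s" "C s 1 = s"
  using assms by (simp_all add: is_copula_def)

lemma fold_pow_Suc: "n \<ge> 1 \<Longrightarrow> fold_pow C (Suc n) = fold_prod (fold_pow C n) C"
  by (cases n) simp_all

lemma fold_pow_density_ge:
  assumes copula: "is_copula C" and density: "is_density C c"
    and lower: "AE z in lborel. z \<in> unit_square \<longrightarrow> K \<le> c z" and "0 \<le> K" and "n \<ge> 1"
  shows "\<exists>d. is_density (fold_pow C n) d \<and> (AE z in lborel. z \<in> unit_square \<longrightarrow> K ^ n \<le> d z) \<and>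
    (\<forall>s\<in>{0..1}. fold_pow C n 1 s = s \<and> fold_pow C n s 1 = s)"
  using \<open>n \<ge> 1\<close>
proof (induction n rule: dec_induct)
  case base
  show ?case
    using density lower is_copula_margins[OF copula] by auto
next
  case (step m)
  then obtain d where d: "is_density (fold_pow C m) d" "AE z in lborel. z \<in> unit_square \<longrightarrow> K ^ m \<le> d z"
      "\<forall>s\<in>{0..1}. fold_pow C m 1 s = s \<and> fold_pow C m s 1 = s"
    by blast
  interpret fold_prod_densities "fold_pow C m" d C c
  proof
    show "AE z in lborel. z \<in> unit_square \<longrightarrow> 0 \<le> d z"
      using d(2) by eventually_elim (use \<open>0 \<le> K\<close> in \<open>auto intro: order_trans[OF zero_le_power]\<close>)
    show "AE z in lborel. z \<in> unit_square \<longrightarrow> 0 \<le> c z"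
      using lower by eventually_elim (use \<open>0 \<le> K\<close> in auto)
  qed (use d density is_copula_margins[OF copula] in auto)
  show ?case
    unfolding fold_pow_Suc[OF step(1)] power_Suc2
    using is_density_fold_prod AE_fold_density_ge[OF d(2) lower] fold_prod_margins \<open>0 \<le> K\<close> by auto
qed

theorem mainTheorem2:
  fixes C :: "real \<Rightarrow> real \<Rightarrow> real" and c :: "real \<times> real \<Rightarrow> real" and K :: real and n :: nat
  assumes "is_copula C"
    and "is_density C c"
    and "K > 0"
    and "AE z in lborel. z \<in> {0..1} \<times> {0..1} \<longrightarrow> K \<le> c z"
    and "n \<ge> 1"
  shows "(\<exists>d. is_density (fold_pow C n) d) \<and>
         (\<forall>d. is_density (fold_pow C n) d \<longrightarrow>
              (AE z in lborel. z \<in> {0..1} \<times> {0..1} \<longrightarrow> K ^ n \<le> d z)) \<and>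
         (\<forall>x\<in>{0..1}. \<forall>y\<in>{0..1}. fold_pow C n x y \<ge> x * y * K ^ n)"
proof -
  obtain d where d: "is_density (fold_pow C n) d" "AE z in lborel. z \<in> unit_square \<longrightarrow> K ^ n \<le> d z"
    using fold_pow_density_ge[OF assms(1,2,4) _ assms(5)] assms(3) by auto
  have "AE z in lborel. z \<in> unit_square \<longrightarrow> K ^ n \<le> d' z" if "is_density (fold_pow C n) d'" for d'
    using is_density_unique[OF d(1) that] d(2) by eventually_elim auto
  then show ?thesis
    using d is_density_ge_mult[OF d] by auto
qed

end
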